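(* Let $P \subseteq \mathbb{R}^7$ be an associative $3$-plane. Then the $3$-dimensional subspace $\Psi(P) = \mathrm{Span}\{\Psi_{uv} : u,v \in P\}$ of $\Lambda^2(\mathbb{R}^7)$ is a Lie subalgebra isomorphic to $\mathfrak{so}(3)$.
   Context: Equip $\mathbb{R}^7$ with its standard inner product, orientation and basis. Let $\varphi = e_{123} - e_{167} - e_{527} - e_{563} - e_{415} - e_{426} - e_{437}$ ($e_{ijk} = e_i\wedge e_j\wedge e_k$), $\psi = \star\varphi = e_{4567} - e_{4523} - e_{4163} - e_{4127} - e_{2637} - e_{1537} - e_{1526}$, and define $\times$ by $\langle u \times v, w \rangle = \varphi(u,v,w)$. A $3$-dimensional subspace is associative if closed under $\times$. $\Psi_{uv}$ is the skew bilinear form $(x,y)\mapsto \psi(u,v,x,y)$. Skew bilinear forms $X$ are identified with skew-adjoint operators via $X(x,y) = \langle X(x), y \rangle$, so $\Lambda^2(\mathbb{R}^7) = \mathfrak{so}(7)$ with bracket the commutator. *)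

theory Defs
  imports "HOL-Analysis.Analysis"
begin

text \<open>R^7 is modelled as real^7. The standard basis vector e_k (k = 1..7) is
  the axis vector at index (k - 1) of the numeral type 7 (whose elements are 0..6).\<close>

definition idx7 :: "nat \<Rightarrow> 7" where
  "idx7 k = of_nat (k - 1)"

definition ebasis :: "nat \<Rightarrow> real^7" where
  "ebasis k = axis (idx7 k) 1"

definition coord :: "nat \<Rightarrow> real^7 \<Rightarrow> real" where
  "coord k x = x $ idx7 k"

definition det3 :: "real \<Rightarrow> real \<Rightarrow> real \<Rightarrow> real \<Rightarrow> real \<Rightarrow> real \<Rightarrow> real \<Rightarrow> real \<Rightarrow> real \<Rightarrow> real" where
  "det3 a b c d e f g h i = a * (e * i - f * h) - b * (d * i - f * g) + c * (d * h - e * g)"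

definition wedge3 :: "nat \<Rightarrow> nat \<Rightarrow> nat \<Rightarrow> real^7 \<Rightarrow> real^7 \<Rightarrow> real^7 \<Rightarrow> real" where
  "wedge3 i j k u v w =
     det3 (coord i u) (coord i v) (coord i w)
          (coord j u) (coord j v) (coord j w)
          (coord k u) (coord k v) (coord k w)"

text \<open>(e_i \<and> e_j \<and> e_k \<and> e_l)(u,v,x,y): 4x4 determinant, Laplace expansion along row i.\<close>
definition wedge4 :: "nat \<Rightarrow> nat \<Rightarrow> nat \<Rightarrow> nat \<Rightarrow> real^7 \<Rightarrow> real^7 \<Rightarrow> real^7 \<Rightarrow> real^7 \<Rightarrow> real" where
  "wedge4 i j k l u v x y =
      coord i u * wedge3 j k l v x y - coord i v * wedge3 j k l u x y
    + coord i x * wedge3 j k l u v y - coord i y * wedge3 j k l u v x"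

definition phi7 :: "real^7 \<Rightarrow> real^7 \<Rightarrow> real^7 \<Rightarrow> real" where
  "phi7 u v w = wedge3 1 2 3 u v w - wedge3 1 6 7 u v w - wedge3 5 2 7 u v w
     - wedge3 5 6 3 u v w - wedge3 4 1 5 u v w - wedge3 4 2 6 u v w - wedge3 4 3 7 u v w"

definition psi7 :: "real^7 \<Rightarrow> real^7 \<Rightarrow> real^7 \<Rightarrow> real^7 \<Rightarrow> real" where
  "psi7 u v x y = wedge4 4 5 6 7 u v x y - wedge4 4 5 2 3 u v x y - wedge4 4 1 6 3 u v x y
     - wedge4 4 1 2 7 u v x y - wedge4 2 6 3 7 u v x y - wedge4 1 5 3 7 u v x y
     - wedge4 1 5 2 6 u v x y"

definition cross7 :: "real^7 \<Rightarrow> real^7 \<Rightarrow> real^7" where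
  "cross7 u v = (\<chi> i. phi7 u v (axis i 1))"

definition associative_plane :: "(real^7) set \<Rightarrow> bool" where
  "associative_plane P \<longleftrightarrow> subspace P \<and> dim P = 3 \<and> (\<forall>u\<in>P. \<forall>v\<in>P. cross7 u v \<in> P)"

text \<open>Psi_{uv} as a skew-adjoint operator, represented by its matrix M (acting by M *v x):
  \<langle>M x, y\<rangle> = psi(u,v,x,y), i.e. M $ j $ i = psi(u,v,e_i,e_j).\<close>
definition PsiM :: "real^7 \<Rightarrow> real^7 \<Rightarrow> real^7^7" where
  "PsiM u v = (\<chi> j i. psi7 u v (axis i 1) (axis j 1))"

definition lie_bracket :: "real^'n^'n \<Rightarrow> real^'n^'n \<Rightarrow> real^'n^'n" where
  "lie_bracket A B = A ** B - B ** A"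

definition so_mat :: "(real^'n^'n) set" where
  "so_mat = {A. transpose A = - A}"

end

theory Submission
  imports Defs
begin

text \<open>
  Take orthonormal a, b in P and c = a \<times> b. Then b \<times> c = a, c \<times> a = b, and a, b, c
  span P; as (u, v) \<mapsto> \<Psi>_uv is bilinear and skew, \<Psi>(P) is spanned by \<Psi>_bc, \<Psi>_ca, \<Psi>_ab.
  The formula \<Psi>_uv x = x \<times> (u \<times> v) + \<langle>u, x\<rangle> v - \<langle>v, x\<rangle> u together with the identity
  (u \<times> v) \<times> w + u \<times> (v \<times> w) = 2\<langle>u, w\<rangle> v - \<langle>v, w\<rangle> u - \<langle>u, v\<rangle> w gives
  [\<Psi>_bc, \<Psi>_ca] = 2 \<Psi>_ab and its cyclic shifts, so the halved generators X, Y, Z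
  satisfy the so(3) relations [X, Y] = Z, [Y, Z] = X, [Z, X] = Y.
  Such a triple is linearly independent as soon as X \<noteq> 0, because ad X \<circ> ad X kills X
  and is -1 on Y and Z; and \<Psi>_ab \<noteq> 0, since it acts as x \<mapsto> x \<times> c on the orthogonal
  complement of P. Independent triples with the so(3) relations span isomorphic Lie
  algebras, and the standard generators of so(3) form such a triple.
\<close>

section \<open>Triples satisfying the so(3) relations\<close>

lemma bilinear_lie_bracket: "bilinear (lie_bracket :: real^'n^'n \<Rightarrow> _)"
proof -
  have "(A + B) ** C = A ** C + B ** C" for A B C :: "real^'n^'n"
    by (simp add: matrix_matrix_mult_def vec_eq_iff algebra_simps sum.distrib)
  then show ?thesis
    unfolding bilinear_def lie_bracket_def
    by (auto intro!: linearI simp: matrix_add_ldistrib scalar_matrix_assoc matrix_scalar_ac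
        algebra_simps)
qed

lemma lie_bracket_anticomm: "lie_bracket B A = - lie_bracket A B"
  by (simp add: lie_bracket_def)

lemma lie_bracket_self [simp]: "lie_bracket A A = 0"
  by (simp add: lie_bracket_def)

definition so3_relations :: "real^'n^'n \<Rightarrow> real^'n^'n \<Rightarrow> real^'n^'n \<Rightarrow> bool" where
  "so3_relations X Y Z \<longleftrightarrow> lie_bracket X Y = Z \<and> lie_bracket Y Z = X \<and> lie_bracket Z X = Y"

lemma so3_relations_rotate: "so3_relations X Y Z \<Longrightarrow> so3_relations Y Z X"
  by (auto simp: so3_relations_def)

lemma so3_relations_nonzero_rotate: "so3_relations X Y Z \<Longrightarrow> X \<noteq> 0 \<Longrightarrow> Y \<noteq> 0"
  by (auto simp: so3_relations_def lie_bracket_def)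

lemma so3_relations_bracket_comb:
  assumes "so3_relations X Y Z"
  shows "lie_bracket (x1 *\<^sub>R X + x2 *\<^sub>R Y + x3 *\<^sub>R Z) (y1 *\<^sub>R X + y2 *\<^sub>R Y + y3 *\<^sub>R Z)
    = (x2*y3 - x3*y2) *\<^sub>R X + (x3*y1 - x1*y3) *\<^sub>R Y + (x1*y2 - x2*y1) *\<^sub>R Z"
proof -
  have "lie_bracket Y X = - Z" "lie_bracket Z Y = - X" "lie_bracket X Z = - Y"
    using assms lie_bracket_anticomm unfolding so3_relations_def by metis+
  with assms show ?thesis
    by (simp add: so3_relations_def bilinear_ladd[OF bilinear_lie_bracket]
        bilinear_radd[OF bilinear_lie_bracket] bilinear_lmul[OF bilinear_lie_bracket]
        bilinear_rmul[OF bilinear_lie_bracket] algebra_simps)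
qed

lemma so3_relations_first_coeff_eq_0:
  assumes rel: "so3_relations X Y Z" and "X \<noteq> 0" and comb: "x *\<^sub>R X + y *\<^sub>R Y + z *\<^sub>R Z = 0"
  shows "x = 0"
proof -
  have "- (y *\<^sub>R Y + z *\<^sub>R Z) = lie_bracket X (lie_bracket X (x *\<^sub>R X + y *\<^sub>R Y + z *\<^sub>R Z))"
    using so3_relations_bracket_comb[OF rel, of 1 0 0 x y z]
      so3_relations_bracket_comb[OF rel, of 1 0 0 0 "-z" y] by simp
  also have "\<dots> = 0"
    using comb by (simp add: lie_bracket_def)
  finally have "y *\<^sub>R Y + z *\<^sub>R Z = 0"
    by (simp only: neg_equal_0_iff_equal)
  with comb have "x *\<^sub>R X = 0"
    by (simp add: add.assoc)
  with \<open>X \<noteq> 0\<close> show ?thesis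
    by simp
qed

lemma so3_relations_coeffs_eq_0:
  assumes rel: "so3_relations X Y Z" and "X \<noteq> 0" and comb: "x *\<^sub>R X + y *\<^sub>R Y + z *\<^sub>R Z = 0"
  shows "x = 0 \<and> y = 0 \<and> z = 0"
proof -
  have rel': "so3_relations Y Z X" "so3_relations Z X Y"
    using rel so3_relations_rotate by blast+
  moreover have "Y \<noteq> 0" "Z \<noteq> 0"
    using rel rel' \<open>X \<noteq> 0\<close> so3_relations_nonzero_rotate by blast+
  moreover have "y *\<^sub>R Y + z *\<^sub>R Z + x *\<^sub>R X = 0" "z *\<^sub>R Z + x *\<^sub>R X + y *\<^sub>R Y = 0"
    using comb by (simp_all add: algebra_simps)
  ultimately show ?thesis
    using so3_relations_first_coeff_eq_0 assms by metis
qed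

lemma so3_relations_coeffs_unique:
  assumes "so3_relations X Y Z" and "X \<noteq> 0"
    and "x1 *\<^sub>R X + x2 *\<^sub>R Y + x3 *\<^sub>R Z = y1 *\<^sub>R X + y2 *\<^sub>R Y + y3 *\<^sub>R Z"
  shows "x1 = y1 \<and> x2 = y2 \<and> x3 = y3"
proof -
  have "(x1 - y1) *\<^sub>R X + (x2 - y2) *\<^sub>R Y + (x3 - y3) *\<^sub>R Z = 0"
    using assms(3) by (simp add: algebra_simps)
  then show ?thesis
    using so3_relations_coeffs_eq_0 assms(1,2) by fastforce
qed

lemma span3_explicit: "A \<in> span {X, Y, Z} \<longleftrightarrow> (\<exists>x y z. A = x *\<^sub>R X + y *\<^sub>R Y + z *\<^sub>R Z)"
proof
  assume "A \<in> span {X, Y, Z}"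
  then obtain x y z where "A - x *\<^sub>R X - y *\<^sub>R Y = z *\<^sub>R Z"
    by (auto simp: span_breakdown_eq span_singleton)
  then show "\<exists>x y z. A = x *\<^sub>R X + y *\<^sub>R Y + z *\<^sub>R Z"
    by (metis add.commute diff_diff_eq eq_diff_eq)
next
  assume "\<exists>x y z. A = x *\<^sub>R X + y *\<^sub>R Y + z *\<^sub>R Z"
  then show "A \<in> span {X, Y, Z}"
    by (auto intro!: span_add span_scale simp: span_base)
qed

lemma so3_relations_distinct:
  assumes "so3_relations X Y Z" and "X \<noteq> 0"
  shows "X \<noteq> Y" "Y \<noteq> Z" "Z \<noteq> X"
  using so3_relations_coeffs_eq_0[OF assms, of 1 "-1" 0] so3_relations_coeffs_eq_0[OF assms, of 0 1 "-1"]
    so3_relations_coeffs_eq_0[OF assms, of "-1" 0 1] by auto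

lemma so3_relations_independent:
  assumes "so3_relations X Y Z" and "X \<noteq> 0"
  shows "independent {X, Y, Z}"
proof (rule independent_if_scalars_zero)
  fix f W
  assume "(\<Sum>v\<in>{X, Y, Z}. f v *\<^sub>R v) = 0" and "W \<in> {X, Y, Z}"
  moreover have "f X *\<^sub>R X + f Y *\<^sub>R Y + f Z *\<^sub>R Z = (\<Sum>v\<in>{X, Y, Z}. f v *\<^sub>R v)"
    using so3_relations_distinct[OF assms] by (simp add: add.assoc)
  ultimately show "f W = 0"
    using so3_relations_coeffs_eq_0[OF assms] by auto
qed simp

lemma dim_span_so3_relations:
  assumes "so3_relations X Y Z" and "X \<noteq> 0"
  shows "dim (span {X, Y, Z}) = 3"
proof -
  have "dim (span {X, Y, Z}) = card {X, Y, Z}"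
    by (rule dim_span_eq_card_independent[OF so3_relations_independent[OF assms]])
  then show ?thesis
    using so3_relations_distinct[OF assms] by simp
qed

lemma lie_bracket_span_so3_relations:
  assumes "so3_relations X Y Z" and "A \<in> span {X, Y, Z}" and "B \<in> span {X, Y, Z}"
  shows "lie_bracket A B \<in> span {X, Y, Z}"
  using assms(2,3) unfolding span3_explicit
  by (auto simp: so3_relations_bracket_comb[OF assms(1)]) blast

lemma so3_relations_span_iso:
  fixes X Y Z :: "real^'n^'n" and X' Y' Z' :: "real^'m^'m"
  assumes rel: "so3_relations X Y Z" "X \<noteq> 0" and rel': "so3_relations X' Y' Z'" "X' \<noteq> 0"
  obtains f where "linear f" and "bij_betw f (span {X, Y, Z}) (span {X', Y', Z'})"
    and "\<forall>A\<in>span {X, Y, Z}. \<forall>B\<in>span {X, Y, Z}. f (lie_bracket A B) = lie_bracket (f A) (f B)"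
proof -
  obtain f where lin: "linear f" and f: "f X = X'" "f Y = Y'" "f Z = Z'"
    using linear_independent_extend[OF so3_relations_independent[OF rel],
        of "\<lambda>v. if v = X then X' else if v = Y then Y' else Z'"]
      so3_relations_distinct[OF rel] by auto
  have f_comb: "f (x *\<^sub>R X + y *\<^sub>R Y + z *\<^sub>R Z) = x *\<^sub>R X' + y *\<^sub>R Y' + z *\<^sub>R Z'" for x y z
    using f by (simp add: linear_add[OF lin] linear_scale[OF lin])
  have "inj_on f (span {X, Y, Z})"
  proof
    fix A B assume "A \<in> span {X, Y, Z}" "B \<in> span {X, Y, Z}" and fAB: "f A = f B"
    then obtain x y z x' y' z' where A: "A = x *\<^sub>R X + y *\<^sub>R Y + z *\<^sub>R Z"
      and B: "B = x' *\<^sub>R X + y' *\<^sub>R Y + z' *\<^sub>R Z"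
      by (meson span3_explicit)
    have "x = x' \<and> y = y' \<and> z = z'"
      using fAB unfolding A B f_comb by (rule so3_relations_coeffs_unique[OF rel'])
    then show "A = B"
      by (simp add: A B)
  qed
  moreover have "f ` span {X, Y, Z} = span {X', Y', Z'}"
    using span_linear_image[OF lin, of "{X, Y, Z}"] f by simp
  moreover have "f (lie_bracket A B) = lie_bracket (f A) (f B)"
    if "A \<in> span {X, Y, Z}" "B \<in> span {X, Y, Z}" for A B
    using that by (auto simp: span3_explicit f_comb so3_relations_bracket_comb[OF rel(1)]
        so3_relations_bracket_comb[OF rel'(1)])
  ultimately show thesis
    using that lin by (simp add: bij_betw_def)
qed

definition so3_E1 :: "real^3^3" where
  "so3_E1 = (\<chi> i j. if i = 3 \<and> j = 2 then 1 else if i = 2 \<and> j = 3 then -1 else 0)"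

definition so3_E2 :: "real^3^3" where
  "so3_E2 = (\<chi> i j. if i = 1 \<and> j = 3 then 1 else if i = 3 \<and> j = 1 then -1 else 0)"

definition so3_E3 :: "real^3^3" where
  "so3_E3 = (\<chi> i j. if i = 2 \<and> j = 1 then 1 else if i = 1 \<and> j = 2 then -1 else 0)"

lemma so3_relations_so3_E: "so3_relations so3_E1 so3_E2 so3_E3"
  by (simp add: so3_relations_def lie_bracket_def so3_E1_def so3_E2_def so3_E3_def vec_eq_iff
      forall_3 matrix_matrix_mult_def sum_3)

lemma so3_E1_nonzero: "so3_E1 \<noteq> 0"
proof
  assume "so3_E1 = 0"
  then have "so3_E1 $ 3 $ 2 = 0"
    by simp
  then show False
    by (simp add: so3_E1_def)
qed

lemma subspace_so_mat: "subspace (so_mat :: (real^'n^'n) set)"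
proof -
  have "transpose (0 :: real^'n^'n) = 0" "transpose (A + B) = transpose A + transpose B"
    for A B :: "real^'n^'n"
    by (simp_all add: vec_eq_iff transpose_def)
  then show ?thesis
    by (auto simp: subspace_def so_mat_def transpose_scalar)
qed

lemma span_so3_E: "span {so3_E1, so3_E2, so3_E3} = so_mat"
proof
  show "span {so3_E1, so3_E2, so3_E3} \<subseteq> so_mat"
    by (rule span_minimal[OF _ subspace_so_mat])
      (auto simp: so_mat_def so3_E1_def so3_E2_def so3_E3_def vec_eq_iff
        transpose_def forall_3)
  show "so_mat \<subseteq> span {so3_E1, so3_E2, so3_E3}"
  proof
    fix M :: "real^3^3" assume "M \<in> so_mat"
    then have "transpose M = - M"
      by (simp add: so_mat_def)
    have skew: "M $ i $ j = - M $ j $ i" for i j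
      using arg_cong[OF \<open>transpose M = - M\<close>, of "\<lambda>A. A $ j $ i"]
      by (simp add: transpose_def)
    have "M = (M$3$2) *\<^sub>R so3_E1 + (M$1$3) *\<^sub>R so3_E2 + (M$2$1) *\<^sub>R so3_E3"
      using skew[of 1 1] skew[of 2 2] skew[of 3 3] skew[of 2 3] skew[of 3 1] skew[of 1 2]
      by (auto simp: vec_eq_iff forall_3 so3_E1_def so3_E2_def so3_E3_def)
    then show "M \<in> span {so3_E1, so3_E2, so3_E3}"
      by (auto simp: span3_explicit)
  qed
qed

lemma bilinear_anticomm_image_span3:
  fixes B :: "'a::real_vector \<Rightarrow> 'a \<Rightarrow> 'b::real_vector"
  assumes bil: "bilinear B" and anticomm: "\<And>x y. B y x = - B x y"
    and "u \<in> span {a, b, c}" and "v \<in> span {a, b, c}"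
  shows "B u v \<in> span {B b c, B c a, B a b}"
proof -
  let ?T = "span {B b c, B c a, B a b}"
  have "2 *\<^sub>R B x x = 0" for x
    using anticomm[of x x] by (simp add: scaleR_2 eq_neg_iff_add_eq_0)
  then have diag: "B x x = 0" for x
    by simp
  have gen: "B x y \<in> ?T" if "x \<in> {a, b, c}" "y \<in> {a, b, c}" for x y
  proof -
    have "B b c \<in> ?T" "B c a \<in> ?T" "B a b \<in> ?T"
      by (simp_all add: span_base)
    then have "- B b c \<in> ?T" "- B c a \<in> ?T" "- B a b \<in> ?T"
      by (simp_all add: span_neg)
    with \<open>B b c \<in> ?T\<close> \<open>B c a \<in> ?T\<close> \<open>B a b \<in> ?T\<close> show ?thesis
      using that diag anticomm[of b c] anticomm[of c a] anticomm[of a b] by (auto simp: span_zero)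
  qed
  have left_gen: "B x y \<in> ?T" if "x \<in> {a, b, c}" "y \<in> span {a, b, c}" for x y
  proof -
    have "span {a, b, c} \<subseteq> B x -` ?T"
      using gen[OF that(1)] bil unfolding bilinear_def
      by (intro span_minimal linear_subspace_vimage subspace_span) auto
    with that show ?thesis
      by blast
  qed
  have "span {a, b, c} \<subseteq> (\<lambda>x. B x v) -` ?T"
    using left_gen[OF _ assms(4)] bil unfolding bilinear_def
    by (intro span_minimal linear_subspace_vimage subspace_span) auto
  with assms(3) show ?thesis
    by blast
qed

section \<open>The cross product and \<Psi> on R^7\<close>

lemma exhaust_7:
  fixes x :: 7
  shows "x = 0 \<or> x = 1 \<or> x = 2 \<or> x = 3 \<or> x = 4 \<or> x = 5 \<or> x = 6"
proof (induct x)
  case (of_int z)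
  then have "z = 0 \<or> z = 1 \<or> z = 2 \<or> z = 3 \<or> z = 4 \<or> z = 5 \<or> z = 6" by fastforce
  then show ?case by auto
qed

lemma forall_7: "(\<forall>i::7. P i) \<longleftrightarrow> P 0 \<and> P 1 \<and> P 2 \<and> P 3 \<and> P 4 \<and> P 5 \<and> P 6"
  by (metis exhaust_7)

lemma sum_7: "sum f (UNIV::7 set) = f 0 + f 1 + f 2 + f 3 + f 4 + f 5 + f 6"
proof -
  have UNIV_7: "UNIV = {0, 1, 2, 3, 4, 5, 6::7}"
    using exhaust_7 by auto
  show ?thesis
    unfolding UNIV_7 by (simp add: ac_simps)
qed

lemma inner_real7:
  "inner (x::real^7) y = x$0*y$0 + x$1*y$1 + x$2*y$2 + x$3*y$3 + x$4*y$4 + x$5*y$5 + x$6*y$6"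
  by (simp add: inner_vec_def sum_7)

lemma coord_simps [simp]:
  "coord 1 x = x$0" "coord (Suc 0) x = x$0" "coord 2 x = x$1" "coord 3 x = x$2" "coord 4 x = x$3"
  "coord 5 x = x$4" "coord 6 x = x$5" "coord 7 x = x$6"
  by (simp_all add: coord_def idx7_def)

lemma cross7_nth:
  "cross7 u v $ 0 = u$1 * v$2 - u$2 * v$1 - u$5 * v$6 + u$6 * v$5 + u$3 * v$4 - u$4 * v$3"
  "cross7 u v $ 1 = - u$0 * v$2 + u$2 * v$0 + u$4 * v$6 - u$6 * v$4 + u$3 * v$5 - u$5 * v$3"
  "cross7 u v $ 2 = u$0 * v$1 - u$1 * v$0 - u$4 * v$5 + u$5 * v$4 + u$3 * v$6 - u$6 * v$3"
  "cross7 u v $ 3 = - u$0 * v$4 + u$4 * v$0 - u$1 * v$5 + u$5 * v$1 - u$2 * v$6 + u$6 * v$2"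
  "cross7 u v $ 4 = - u$1 * v$6 + u$6 * v$1 - u$5 * v$2 + u$2 * v$5 - u$3 * v$0 + u$0 * v$3"
  "cross7 u v $ 5 = u$0 * v$6 - u$6 * v$0 + u$4 * v$2 - u$2 * v$4 - u$3 * v$1 + u$1 * v$3"
  "cross7 u v $ 6 = - u$0 * v$5 + u$5 * v$0 - u$4 * v$1 + u$1 * v$4 - u$3 * v$2 + u$2 * v$3"
  by (simp_all add: cross7_def phi7_def wedge3_def det3_def axis_def algebra_simps)

lemma bilinear_cross7: "bilinear cross7"
  unfolding bilinear_def
  by (auto intro!: linearI simp: vec_eq_iff forall_7 cross7_nth algebra_simps)

lemma cross7_anticomm: "cross7 v u = - cross7 u v"
  by (simp add: vec_eq_iff forall_7 cross7_nth algebra_simps)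

lemma cross7_self [simp]: "cross7 u u = 0"
  by (simp add: vec_eq_iff forall_7 cross7_nth)

lemma inner_cross7_cyclic: "inner (cross7 u v) w = inner u (cross7 v w)"
  by (simp add: inner_real7 cross7_nth algebra_simps)

lemma inner_cross7_right [simp]: "inner (cross7 u v) v = 0"
  by (simp add: inner_real7 cross7_nth algebra_simps)

lemma inner_cross7_cross7:
  "inner (cross7 u v) (cross7 u w) = inner u u * inner v w - inner u v * inner u w"
  by (simp add: inner_real7 cross7_nth algebra_simps)

lemma cross7_cross7_left:
  "cross7 (cross7 u v) w = (2 * inner u w) *\<^sub>R v - inner v w *\<^sub>R u - inner u v *\<^sub>R w
     - cross7 u (cross7 v w)"
  by (simp add: vec_eq_iff forall_7 cross7_nth inner_real7 algebra_simps)

lemma cross7_cross7_same: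
  "cross7 u (cross7 v u) = inner u u *\<^sub>R v - inner u v *\<^sub>R u"
  by (simp add: vec_eq_iff forall_7 cross7_nth inner_real7 algebra_simps)

lemma PsiM_apply:
  "PsiM u v *v x = cross7 x (cross7 u v) + inner u x *\<^sub>R v - inner v x *\<^sub>R u"
  by (simp add: vec_eq_iff forall_7 matrix_vector_mult_def PsiM_def sum_7 psi7_def wedge4_def
      wedge3_def det3_def axis_def cross7_nth inner_real7 algebra_simps)

lemma transpose_PsiM: "transpose (PsiM u v) = - PsiM u v"
proof -
  have skew: "psi7 u v x y = - psi7 u v y x" for x y
    by (simp add: psi7_def wedge4_def wedge3_def det3_def algebra_simps)
  show ?thesis
    by (simp add: vec_eq_iff transpose_def PsiM_def) (metis skew)
qed

lemmas cross7_bilinear_simps =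
  bilinear_ladd[OF bilinear_cross7] bilinear_radd[OF bilinear_cross7]
  bilinear_lsub[OF bilinear_cross7] bilinear_rsub[OF bilinear_cross7]
  bilinear_lmul[OF bilinear_cross7] bilinear_rmul[OF bilinear_cross7]
  bilinear_lneg[OF bilinear_cross7] bilinear_rneg[OF bilinear_cross7]

lemma bilinear_PsiM: "bilinear PsiM"
  unfolding bilinear_def
  by (auto intro!: linearI simp: matrix_eq PsiM_apply cross7_bilinear_simps inner_add_left
      inner_add_right matrix_vector_mult_add_rdistrib scaleR_matrix_vector_assoc[symmetric]
      algebra_simps)

lemma PsiM_anticomm: "PsiM v u = - PsiM u v"
proof -
  have "(PsiM v u + PsiM u v) *v x = 0 *v x" for x
    by (simp add: matrix_vector_mult_add_rdistrib PsiM_apply cross7_anticomm[of v u]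
        cross7_bilinear_simps algebra_simps)
  then have "PsiM v u + PsiM u v = 0"
    unfolding matrix_eq by simp
  then show ?thesis
    by (simp add: eq_neg_iff_add_eq_0)
qed

section \<open>Cross frames of associative planes\<close>

definition cross_frame :: "real^7 \<Rightarrow> real^7 \<Rightarrow> real^7 \<Rightarrow> bool" where
  "cross_frame a b c \<longleftrightarrow> inner a a = 1 \<and> inner b b = 1 \<and> inner a b = 0 \<and> cross7 a b = c"

lemma cross_frame_rotate:
  assumes "cross_frame a b c"
  shows "cross_frame b c a"
proof -
  have a: "inner a a = 1" and b: "inner b b = 1" and ab: "inner a b = 0" and c: "c = cross7 a b"
    using assms by (auto simp: cross_frame_def)
  have "inner b a = 0"
    using ab by (simp add: inner_commute)
  then have "cross7 b c = a"
    using b unfolding c by (simp add: cross7_cross7_same)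
  moreover have "inner c c = 1"
    using a b ab unfolding c by (simp add: inner_cross7_cross7)
  moreover have "inner b c = 0"
    unfolding c by (simp add: inner_commute[of b])
  ultimately show ?thesis
    using b by (simp add: cross_frame_def)
qed

lemma cross_frame_facts:
  assumes "cross_frame a b c"
  shows "inner a a = 1" "inner b b = 1" "inner c c = 1"
    "inner a b = 0" "inner b c = 0" "inner c a = 0"
    "inner b a = 0" "inner c b = 0" "inner a c = 0"
    "cross7 a b = c" "cross7 b c = a" "cross7 c a = b"
  using assms cross_frame_rotate[OF assms] cross_frame_rotate[OF cross_frame_rotate[OF assms]]
  by (auto simp: cross_frame_def inner_commute)

lemma cross_frame_independent:
  assumes "cross_frame a b c"
  shows "independent {a, b, c}" and "card {a, b, c} = 3"
proof -
  note frame = cross_frame_facts[OF assms]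
  show "independent {a, b, c}"
    using frame by (intro pairwise_orthogonal_independent) (auto simp: pairwise_def orthogonal_def)
  have "a \<noteq> b" "b \<noteq> c" "c \<noteq> a"
    using frame by auto
  then show "card {a, b, c} = 3"
    by simp
qed

lemma associative_plane_cross_frame:
  assumes "associative_plane P"
  obtains a b c where "cross_frame a b c" and "P = span {a, b, c}"
proof -
  have P: "subspace P" "dim P = 3" and closed: "\<And>u v. u \<in> P \<Longrightarrow> v \<in> P \<Longrightarrow> cross7 u v \<in> P"
    using assms by (auto simp: associative_plane_def)
  obtain B where B: "B \<subseteq> P" "pairwise orthogonal B" "\<And>x. x \<in> B \<Longrightarrow> norm x = 1" "card B = 3"
    using orthonormal_basis_subspace[OF P(1)] P(2) by metis
  then obtain a b c' where "B = {a, b, c'}" and "a \<noteq> b"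
    by (metis card_3_iff)
  with B have ab: "a \<in> P" "b \<in> P" "norm a = 1" "norm b = 1" "orthogonal a b"
    by (auto simp: pairwise_def)
  then have frame: "cross_frame a b (cross7 a b)"
    by (simp add: cross_frame_def orthogonal_def norm_eq_1)
  have abc: "{a, b, cross7 a b} \<subseteq> P"
    using ab closed by auto
  have "P \<subseteq> span {a, b, cross7 a b}"
    using abc cross_frame_independent[OF frame] P(2) by (intro card_ge_dim_independent) auto
  moreover have "span {a, b, cross7 a b} \<subseteq> P"
    using abc P(1) by (rule span_minimal)
  ultimately show thesis
    using that frame by blast
qed

lemma PsiM_cross_frame_nonzero:
  assumes "cross_frame a b c"
  shows "PsiM a b \<noteq> 0"
proof
  assume PsiM0: "PsiM a b = 0"
  note frame = cross_frame_facts[OF assms]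
  have "dim {a, b, c} = 3"
    using dim_span_eq_card_independent[OF cross_frame_independent(1)[OF assms]]
      cross_frame_independent(2)[OF assms] by simp
  then obtain z where "z \<noteq> 0" and orth: "\<And>y. y \<in> span {a, b, c} \<Longrightarrow> orthogonal z y"
    using orthogonal_to_subspace_exists[of "{a, b, c}"] by auto
  have "orthogonal z a" "orthogonal z b" "orthogonal z c"
    by (simp_all add: orth span_base)
  then have z: "inner a z = 0" "inner b z = 0" "inner z c = 0"
    by (simp_all add: orthogonal_def inner_commute)
  have "PsiM a b *v z = cross7 z c"
    using z frame by (simp add: PsiM_apply)
  then have "inner (cross7 z c) (cross7 z c) = 0"
    using PsiM0 by simp
  then have "inner z z = 0"
    using frame z by (simp add: inner_cross7_cross7)
  with \<open>z \<noteq> 0\<close> show False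
    by simp
qed

lemma lie_bracket_PsiM_cross_frame:
  assumes "cross_frame a b c"
  shows "lie_bracket (PsiM b c) (PsiM c a) = 2 *\<^sub>R PsiM a b"
proof -
  note frame = cross_frame_facts[OF assms]
  have cross: "cross7 b a = - c" "cross7 c b = - a" "cross7 a c = - b"
    using frame cross7_anticomm by metis+
  have inner_cross: "inner a (cross7 x a) = 0" "inner b (cross7 x b) = 0"
    "inner c (cross7 x b) = inner a x" "inner c (cross7 x a) = - inner b x" for x
    by (simp_all add: inner_commute[of _ "cross7 x _"] inner_cross7_cyclic frame cross
        inner_commute[of x])
  have BC_CA: "PsiM b c *v (PsiM c a *v x) = cross7 (cross7 x b) a - inner a x *\<^sub>R b" for x
    by (simp add: PsiM_apply frame cross cross7_bilinear_simps inner_add_right inner_diff_right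
        inner_cross)
  have CA_BC: "PsiM c a *v (PsiM b c *v x) = cross7 (cross7 x a) b - inner b x *\<^sub>R a" for x
    by (simp add: PsiM_apply frame cross cross7_bilinear_simps inner_add_right inner_diff_right
        inner_cross)
  have "lie_bracket (PsiM b c) (PsiM c a) *v x = (2 *\<^sub>R PsiM a b) *v x" for x
    unfolding lie_bracket_def matrix_vector_mult_diff_rdistrib matrix_vector_mul_assoc[symmetric]
      BC_CA CA_BC scaleR_matrix_vector_assoc[symmetric]
    by (simp add: PsiM_apply cross7_cross7_left frame cross cross7_bilinear_simps inner_commute[of x]
        algebra_simps) (simp add: scaleR_2 mult_2_right)
  then show ?thesis
    by (simp add: matrix_eq)
qed

lemma so3_relations_half_PsiM:
  assumes "cross_frame a b c"
  shows "so3_relations ((1/2) *\<^sub>R PsiM b c) ((1/2) *\<^sub>R PsiM c a) ((1/2) *\<^sub>R PsiM a b)"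
proof -
  have "cross_frame b c a" "cross_frame c a b"
    using assms cross_frame_rotate by blast+
  then show ?thesis
    using lie_bracket_PsiM_cross_frame assms
    by (simp add: so3_relations_def bilinear_lmul[OF bilinear_lie_bracket]
        bilinear_rmul[OF bilinear_lie_bracket])
qed

lemma span_PsiM_span3:
  "span {PsiM u v | u v. u \<in> span {a, b, c} \<and> v \<in> span {a, b, c}}
     = span {PsiM b c, PsiM c a, PsiM a b}"
proof -
  have "a \<in> span {a, b, c}" "b \<in> span {a, b, c}" "c \<in> span {a, b, c}"
    by (simp_all add: span_base)
  then have "{PsiM b c, PsiM c a, PsiM a b}
      \<subseteq> span {PsiM u v | u v. u \<in> span {a, b, c} \<and> v \<in> span {a, b, c}}"
    by (blast intro: span_base)
  moreover have "{PsiM u v | u v. u \<in> span {a, b, c} \<and> v \<in> span {a, b, c}}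
      \<subseteq> span {PsiM b c, PsiM c a, PsiM a b}"
    using bilinear_anticomm_image_span3[OF bilinear_PsiM PsiM_anticomm] by blast
  ultimately show ?thesis
    unfolding span_eq by blast
qed

theorem proposition4p5:
  fixes P :: "(real^7) set"
  assumes "associative_plane P"
  defines "S \<equiv> span {PsiM u v | u v. u \<in> P \<and> v \<in> P}"
  shows "dim S = 3
     \<and> S \<subseteq> (so_mat :: (real^7^7) set)
     \<and> (\<forall>A\<in>S. \<forall>B\<in>S. lie_bracket A B \<in> S)
     \<and> (\<exists>f :: real^7^7 \<Rightarrow> real^3^3. linear f \<and> bij_betw f S (so_mat :: (real^3^3) set)
          \<and> (\<forall>A\<in>S. \<forall>B\<in>S. f (lie_bracket A B) = lie_bracket (f A) (f B)))"
proof -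
  obtain a b c where frame: "cross_frame a b c" and P: "P = span {a, b, c}"
    using associative_plane_cross_frame[OF assms(1)] .
  define X Y Z where "X = (1/2) *\<^sub>R PsiM b c" and "Y = (1/2) *\<^sub>R PsiM c a"
    and "Z = (1/2) *\<^sub>R PsiM a b"
  have rel: "so3_relations X Y Z"
    unfolding X_def Y_def Z_def by (rule so3_relations_half_PsiM[OF frame])
  have "X \<noteq> 0"
    using PsiM_cross_frame_nonzero[OF cross_frame_rotate[OF frame]] by (simp add: X_def)
  have S: "S = span {X, Y, Z}"
    using span_image_scale[of "{PsiM b c, PsiM c a, PsiM a b}" "\<lambda>_. 1/2"]
    by (simp add: S_def P span_PsiM_span3 X_def Y_def Z_def)
  have "dim S = 3"
    unfolding S by (rule dim_span_so3_relations[OF rel \<open>X \<noteq> 0\<close>])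
  moreover have "S \<subseteq> so_mat"
    unfolding S_def
    by (rule span_minimal[OF _ subspace_so_mat]) (auto simp: so_mat_def transpose_PsiM)
  moreover have "\<forall>A\<in>S. \<forall>B\<in>S. lie_bracket A B \<in> S"
    unfolding S using lie_bracket_span_so3_relations[OF rel] by blast
  moreover obtain f :: "real^7^7 \<Rightarrow> real^3^3" where "linear f" and "bij_betw f S so_mat"
    and "\<forall>A\<in>S. \<forall>B\<in>S. f (lie_bracket A B) = lie_bracket (f A) (f B)"
    unfolding S span_so3_E[symmetric]
    by (rule so3_relations_span_iso[OF rel \<open>X \<noteq> 0\<close> so3_relations_so3_E so3_E1_nonzero])
  ultimately show ?thesis
    by blast
qed

end
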